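(* There exists a probability measure $\mu$ on $\{0,1\}^{\mathbb{N}}$ such that $\Delta_n(\mu)\to0$ as $n\to\infty$ but $\mu$ does not satisfy the following condition (TC1): $(\mathbb{N},\xi)$ is totally bounded and for every $\varepsilon>0$ there exist events $(E_k)_{k\in\mathbb{N}}$ (in the probability space on which $X\sim\mu$ is defined) and a finite set $J\subset\mathbb{N}$ with (1) $\mathbb{P}(E_k)\le\varepsilon$ for all $k$; (2) $\sup_k\frac{\log(k+1)}{\log(1/\mathbb{P}(E_k))}<\infty$; (3) for every $i\in\mathbb{N}$ there exist $j\in J$ and $k\in\mathbb{N}$ with $\{X_i\neq X_j\}\subset E_k$.
   Context: For $X\sim\mu$, $\xi(i,j):=\mathbb{P}(X_i\neq X_j)$; $(\mathbb{N},\xi)$ is totally bounded if for every $\varepsilon>0$ there is a finite $S\subset\mathbb{N}$ such that every $i$ has $s\in S$ with $\xi(i,s)\le\varepsilon$. For $n\ge1$, with $X^{(1)},\dots,X^{(n)}$ i.i.d. from $\mu$, $\Delta_n(\mu):=\mathbb{E}\sup_{j\in\mathbb{N}}\left|\frac1n\sum_{i=1}^nX^{(i)}_j-\mathbb{E}[X_j]\right|$. $\log(1/0)=\infty$. *)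

theory Defs
  imports "HOL-Probability.Probability"
begin

text \<open>The coordinate X_j is x j (True = 1, False = 0). A probability measure mu on {0,1}^N
  is a measure M on this space with prob_space M; X ~ mu is realised canonically as the
  identity on (space M, M).\<close>

definition cube :: "(nat \<Rightarrow> bool) measure" where
  "cube = (\<Pi>\<^sub>M j\<in>(UNIV::nat set). count_space (UNIV::bool set))"

definition is_prob_on_cube :: "(nat \<Rightarrow> bool) measure \<Rightarrow> bool" where
  "is_prob_on_cube M \<longleftrightarrow> prob_space M \<and> sets M = sets cube"

definition xi :: "(nat \<Rightarrow> bool) measure \<Rightarrow> nat \<Rightarrow> nat \<Rightarrow> real" where
  "xi M i j = measure M {x \<in> space M. x i \<noteq> x j}"

definition totally_bounded_xi :: "(nat \<Rightarrow> bool) measure \<Rightarrow> bool" where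
  "totally_bounded_xi M \<longleftrightarrow>
     (\<forall>\<epsilon>>0. \<exists>S. finite S \<and> (\<forall>i. \<exists>s\<in>S. xi M i s \<le> \<epsilon>))"

text \<open>Computed as a nonnegative integral in ennreal
  (the integrand takes values in [0,1]).\<close>
definition Delta :: "(nat \<Rightarrow> bool) measure \<Rightarrow> nat \<Rightarrow> ennreal" where
  "Delta M n = (\<integral>\<^sup>+ \<omega>. (SUP j. ennreal \<bar>(1 / real n) * (\<Sum>i<n. (if \<omega> i j then 1 else 0))
        - measure M {x \<in> space M. x j}\<bar>) \<partial>(\<Pi>\<^sub>M i\<in>{..<n}. M))"

text \<open>Condition (2), sup_k log(k+1)/log(1/P(E_k)) < \<infinity> with log(1/0) = \<infinity>,
  is written as: there is a constant C such that for every k either P(E_k) = 0 (ratio 0)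
  or log(k+1) \<le> C * log(1/P(E_k)).\<close>
definition TC1 :: "(nat \<Rightarrow> bool) measure \<Rightarrow> bool" where
  "TC1 M \<longleftrightarrow> totally_bounded_xi M \<and>
     (\<forall>\<epsilon>>0. \<exists>(E :: nat \<Rightarrow> (nat \<Rightarrow> bool) set) J.
        (\<forall>k. E k \<in> sets M) \<and> finite J \<and>
        (\<forall>k. measure M (E k) \<le> \<epsilon>) \<and>
        (\<exists>C::real. \<forall>k. measure M (E k) = 0 \<or> ln (real k + 1) \<le> C * ln (1 / measure M (E k))) \<and>
        (\<forall>i. \<exists>j\<in>J. \<exists>k. {x \<in> space M. x i \<noteq> x j} \<subseteq> E k))"

end

theory Submission
  imports Defs
begin

(* The witness makes the coordinates independent with X_i ~ Bernoulli(p_i), p_i = 1/(i+2).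

   Since sum p_i = infinity, (TC1) fails for eps = 1/4.  Take J finite and B > max J.  A set E_k
   containing {X_i ~= X_j} with i >= B and j in J has probability at least p_j/2, so condition (2)
   leaves only finitely many admissible pairs (j, k).  By divergence, one of them covers a finite F
   with sum_{i in F} p_i >= 2, and then E_k contains {X_j = 0, X_i = 1 for some i in F}, whose
   probability is at least (1 - p_j)(1 - exp(-2)) >= 1/3.

   Since sum p_i^2 < infinity, Delta_n -> 0: for the first N coordinates Hoeffding's inequality
   applies; for j >= N, with probability at least 1 - n^2 sum_{j >= N} p_j^2 no coordinate j equals 1
   in two of the n samples, and then every empirical mean lies in [0, 1/n].  Take N = n^3 and
   deviation n^(-1/4). *)

lemma prod_one_minus_le_exp_neg_sum:
  fixes a :: "'a \<Rightarrow> real"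
  assumes "\<And>i. i \<in> F \<Longrightarrow> a i \<le> 1"
  shows "(\<Prod>i\<in>F. 1 - a i) \<le> exp (- (\<Sum>i\<in>F. a i))"
proof -
  have "(\<Prod>i\<in>F. 1 - a i) \<le> (\<Prod>i\<in>F. exp (- a i))"
    using assms by (intro prod_mono) (auto simp: exp_ge_add_one_self[of "- a _", simplified])
  also have "\<dots> = exp (- (\<Sum>i\<in>F. a i))"
    by (cases "finite F") (simp_all add: exp_sum sum_negf[symmetric])
  finally show ?thesis .
qed

lemma le_powr_of_ln_le:
  fixes y c m C :: real
  assumes "0 < y" "0 < c" "c \<le> m" "m \<le> 1" "ln y \<le> C * ln (1 / m)"
  shows "y \<le> (1 / c) powr max C 0"
proof -
  have "0 \<le> ln (1 / m)" "ln (1 / m) \<le> ln (1 / c)"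
    using assms by (simp_all add: ln_div)
  then have "ln y \<le> max C 0 * ln (1 / c)"
    using assms(5) by (smt (verit) mult_right_mono mult_left_mono max.cobounded1 max.cobounded2)
  then have "exp (ln y) \<le> exp (max C 0 * ln (1 / c))"
    by simp
  then show ?thesis
    using assms by (simp add: powr_def)
qed

lemma sum_le_sum_over_cover:
  fixes f :: "'a \<Rightarrow> real"
  assumes "finite S" "finite G" "S \<subseteq> (\<Union>g\<in>G. A g)" "\<And>i. i \<in> S \<Longrightarrow> 0 \<le> f i"
  shows "sum f S \<le> (\<Sum>g\<in>G. sum f (S \<inter> A g))"
proof -
  have "sum f S \<le> (\<Sum>i\<in>S. \<Sum>g\<in>G. if i \<in> A g then f i else 0)"
  proof (rule sum_mono)
    fix i assume "i \<in> S"
    then obtain g where "g \<in> G" "i \<in> A g"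
      using assms(3) by blast
    then show "f i \<le> (\<Sum>g\<in>G. if i \<in> A g then f i else 0)"
      using assms(2,4) \<open>i \<in> S\<close> member_le_sum[of g G "\<lambda>g. if i \<in> A g then f i else 0"] by auto
  qed
  also have "\<dots> = (\<Sum>g\<in>G. sum f (S \<inter> A g))"
    using assms(1) by (subst sum.swap) (simp add: sum.inter_restrict if_distrib)
  finally show ?thesis .
qed

lemma not_summable_tail_unbounded:
  fixes p :: "nat \<Rightarrow> real"
  assumes "\<not> summable p" "\<And>i. 0 \<le> p i"
  obtains L where "x \<le> (\<Sum>i\<in>{B..<L}. p i)"
proof -
  obtain L where L: "x + (\<Sum>i<B. p i) < (\<Sum>i<L. p i)"
    using assms summableI_nonneg_bounded[of p "x + (\<Sum>i<B. p i)"] by (meson not_le)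
  have "(\<Sum>i<L. p i) \<le> (\<Sum>i\<in>{..<B} \<union> {B..<L}. p i)"
    using assms(2) by (intro sum_mono2) auto
  also have "\<dots> = (\<Sum>i<B. p i) + (\<Sum>i\<in>{B..<L}. p i)"
    by (intro sum.union_disjoint) auto
  finally show ?thesis
    using L by (intro that[of L]) linarith
qed

lemma not_summable_pigeonhole:
  fixes p :: "nat \<Rightarrow> real"
  assumes "\<not> summable p" "\<And>i. 0 \<le> p i" "finite G" "\<And>i. B \<le> i \<Longrightarrow> \<exists>g\<in>G. i \<in> A g"
  obtains g F where "g \<in> G" "finite F" "F \<subseteq> A g - {..<B}" "c \<le> (\<Sum>i\<in>F. p i)"
proof -
  have "G \<noteq> {}"
    using assms(4) by blast
  obtain L where L: "real (card G) * c \<le> (\<Sum>i\<in>{B..<L}. p i)"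
    using not_summable_tail_unbounded[OF assms(1,2)] .
  also have "\<dots> \<le> (\<Sum>g\<in>G. \<Sum>i\<in>{B..<L} \<inter> A g. p i)"
    using assms by (intro sum_le_sum_over_cover) auto
  finally have "\<exists>g\<in>G. c \<le> (\<Sum>i\<in>{B..<L} \<inter> A g. p i)"
    using sum_strict_mono[OF assms(3) \<open>G \<noteq> {}\<close>, of "\<lambda>g. \<Sum>i\<in>{B..<L} \<inter> A g. p i" "\<lambda>_. c"]
    by (force simp: not_le)
  then obtain g where "g \<in> G" "c \<le> (\<Sum>i\<in>{B..<L} \<inter> A g. p i)"
    by blast
  then show ?thesis
    by (intro that[of g "{B..<L} \<inter> A g"]) auto
qed

lemma inverse_square_le_telescoping:
  fixes x :: real
  assumes "0 \<le> x"
  shows "(1 / (x + 2))\<^sup>2 \<le> 1 / (x + 1) - 1 / (x + 2)"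
proof -
  have "(1 / (x + 2))\<^sup>2 \<le> 1 / ((x + 1) * (x + 2))"
    using assms by (simp add: power2_eq_square divide_simps)
  also have "\<dots> = 1 / (x + 1) - 1 / (x + 2)"
    using assms by (simp add: field_simps)
  finally show ?thesis .
qed

lemma
  fixes N :: nat
  shows summable_inverse_square_tail: "summable (\<lambda>j. (1 / (real (j + N) + 2))\<^sup>2)"
    and suminf_inverse_square_tail_le: "(\<Sum>j. (1 / (real (j + N) + 2))\<^sup>2) \<le> 1 / (real N + 1)"
proof -
  define f where "f j = 1 / (real (j + N) + 1) - 1 / (real (Suc j + N) + 1)" for j
  have "(\<lambda>j. 1 / (real (j + N) + 1)) \<longlonglongrightarrow> 0"
    by real_asymp
  then have f_sums: "f sums (1 / (real N + 1))"
    unfolding f_def using telescope_sums' by fastforce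
  have le: "(1 / (real (j + N) + 2))\<^sup>2 \<le> f j" for j
  proof -
    have "real (Suc j + N) + 1 = real (j + N) + 2"
      by simp
    then show ?thesis
      unfolding f_def by (simp only:) (rule inverse_square_le_telescoping, simp)
  qed
  show summable: "summable (\<lambda>j. (1 / (real (j + N) + 2))\<^sup>2)"
  proof (rule summable_comparison_test'[OF sums_summable[OF f_sums]])
    show "norm ((1 / (real (j + N) + 2))\<^sup>2) \<le> f j" for j
      using le[of j] by simp
  qed
  show "(\<Sum>j. (1 / (real (j + N) + 2))\<^sup>2) \<le> 1 / (real N + 1)"
    using suminf_le[OF le summable sums_summable[OF f_sums]] f_sums by (simp add: sums_iff)
qed

lemma not_summable_inverse_add_2: "\<not> summable (\<lambda>i. 1 / (real i + 2))"
proof -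
  have "(\<lambda>i. inverse (real (i + 2))) = (\<lambda>i. 1 / (real i + 2))"
    by (rule ext) (simp add: divide_inverse add.commute)
  then show ?thesis
    using not_summable_harmonic summable_iff_shift[of "\<lambda>n. inverse (real n)" 2] by metis
qed

section \<open>Products of Bernoulli measures\<close>

locale bernoulli_sequence =
  fixes p :: "nat \<Rightarrow> real"
  assumes p_nonneg: "0 \<le> p i" and p_le_1: "p i \<le> 1"
begin

definition \<mu> :: "(nat \<Rightarrow> bool) measure" where
  "\<mu> = (\<Pi>\<^sub>M i\<in>UNIV. measure_pmf (bernoulli_pmf (p i)))"

sublocale coins: product_prob_space "\<lambda>i. measure_pmf (bernoulli_pmf (p i))" UNIV
  by unfold_locales

sublocale \<mu>: prob_space \<mu>
  unfolding \<mu>_def by (rule coins.P.prob_space_axioms)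

lemma space_\<mu> [simp]: "space \<mu> = UNIV"
  by (simp add: \<mu>_def space_PiM)

lemma sets_\<mu>: "sets \<mu> = sets cube"
  unfolding \<mu>_def cube_def by (intro sets_PiM_cong) auto

lemma coordinate_measurable [measurable]: "(\<lambda>x. x i) \<in> measurable \<mu> (count_space UNIV)"
proof -
  have "(\<lambda>x. x i) \<in> measurable \<mu> (measure_pmf (bernoulli_pmf (p i)))"
    unfolding \<mu>_def by (rule measurable_component_singleton) simp
  then show ?thesis by (simp add: measurable_cong_sets)
qed

lemma sets_coordinate: "{x. x j} \<in> sets \<mu>"
proof -
  have "{x\<in>space \<mu>. x j} \<in> sets \<mu>"
    by measurable
  then show ?thesis
    by simp
qed

lemma measure_cylinder:
  assumes "finite J"
  shows "measure \<mu> {x. \<forall>i\<in>J. x i = b i} = (\<Prod>i\<in>J. if b i then p i else 1 - p i)"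
proof -
  have "emeasure \<mu> {x\<in>space \<mu>. \<forall>i\<in>J. x i \<in> {b i}}
      = (\<Prod>i\<in>J. emeasure (measure_pmf (bernoulli_pmf (p i))) {b i})"
    unfolding \<mu>_def by (rule coins.emeasure_PiM_Collect) (use assms in auto)
  also have "\<dots> = (\<Prod>i\<in>J. ennreal (if b i then p i else 1 - p i))"
    using p_nonneg p_le_1 by (intro prod.cong) (auto simp: emeasure_pmf_single)
  finally show ?thesis
    using p_nonneg p_le_1
    by (simp add: \<mu>.emeasure_eq_measure prod_ennreal prod_nonneg)
qed

lemma measure_coordinate: "measure \<mu> {x. x j} = p j"
  using measure_cylinder[of "{j}" "\<lambda>_. True"] by simp

lemma measure_disagree_ge:
  assumes "i \<noteq> j"
  shows "p j * (1 - p i) \<le> measure \<mu> {x. x i \<noteq> x j}"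
proof -
  have "{x. \<forall>k\<in>{i, j}. x k = (k = j)} \<subseteq> {x. x i \<noteq> x j}"
    using assms by auto
  moreover have "{x\<in>space \<mu>. x i \<noteq> x j} \<in> sets \<mu>"
    by measurable
  ultimately have "measure \<mu> {x. \<forall>k\<in>{i, j}. x k = (k = j)} \<le> measure \<mu> {x. x i \<noteq> x j}"
    by (intro \<mu>.finite_measure_mono) auto
  then show ?thesis
    using assms by (subst (asm) measure_cylinder) (auto simp: mult.commute)
qed

lemma measure_zero_and_some_one:
  assumes "finite F" "j \<notin> F"
  shows "measure \<mu> {x. \<not> x j \<and> (\<exists>i\<in>F. x i)} = (1 - p j) * (1 - (\<Prod>i\<in>F. 1 - p i))"
proof -
  let ?zeros = "\<lambda>S. {x. \<forall>i\<in>S. x i = False}"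
  have zeros_sets: "?zeros S \<in> sets \<mu>" if "finite S" for S
  proof -
    have "{x\<in>space \<mu>. \<forall>i\<in>S. x i = False} \<in> sets \<mu>"
      using that by measurable
    then show ?thesis by simp
  qed
  have "{x. \<not> x j \<and> (\<exists>i\<in>F. x i)} = ?zeros {j} - ?zeros (insert j F)"
    by auto
  then have "measure \<mu> {x. \<not> x j \<and> (\<exists>i\<in>F. x i)} = measure \<mu> (?zeros {j}) - measure \<mu> (?zeros (insert j F))"
    using assms(1) by (simp only:) (intro \<mu>.finite_measure_Diff zeros_sets; auto)
  also have "\<dots> = (1 - p j) - (1 - p j) * (\<Prod>i\<in>F. 1 - p i)"
    using assms by (subst (1 2) measure_cylinder) auto
  finally show ?thesis
    by (simp add: right_diff_distrib)
qed

end

section \<open>Failure of (TC1) for divergent sums\<close>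

lemma TC1E:
  assumes "TC1 M" "0 < \<epsilon>"
  obtains E J C where "\<And>k. E k \<in> sets M" "finite J" "\<And>k. measure M (E k) \<le> \<epsilon>"
    "\<And>k. measure M (E k) = 0 \<or> ln (real k + 1) \<le> C * ln (1 / measure M (E k))"
    "\<And>i. \<exists>j\<in>J. \<exists>k. {x \<in> space M. x i \<noteq> x j} \<subseteq> E k"
proof -
  have "\<exists>E J. (\<forall>k. E k \<in> sets M) \<and> finite J \<and> (\<forall>k. measure M (E k) \<le> \<epsilon>) \<and>
      (\<exists>C. \<forall>k. measure M (E k) = 0 \<or> ln (real k + 1) \<le> C * ln (1 / measure M (E k))) \<and>
      (\<forall>i. \<exists>j\<in>J. \<exists>k. {x \<in> space M. x i \<noteq> x j} \<subseteq> E k)"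
    using assms unfolding TC1_def by (elim conjE allE[of _ \<epsilon>]) simp
  then obtain E J C where "\<And>k. E k \<in> sets M" "finite J" "\<And>k. measure M (E k) \<le> \<epsilon>"
    "\<And>k. measure M (E k) = 0 \<or> ln (real k + 1) \<le> C * ln (1 / measure M (E k))"
    "\<And>i. \<exists>j\<in>J. \<exists>k. {x \<in> space M. x i \<noteq> x j} \<subseteq> E k"
    by auto
  then show ?thesis
    by (rule that)
qed

context bernoulli_sequence
begin

lemma measure_ge_if_contains_disagreement:
  assumes "{x. x i \<noteq> x j} \<subseteq> E" "E \<in> sets \<mu>" "i \<noteq> j" "p i \<le> 1/2"
  shows "p j / 2 \<le> measure \<mu> E"
proof -
  have "p j * p i \<le> p j * (1/2)"
    using assms(4) p_nonneg[of j] by (rule mult_left_mono)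
  then have "p j / 2 \<le> p j * (1 - p i)"
    by (simp add: right_diff_distrib)
  also have "\<dots> \<le> measure \<mu> {x. x i \<noteq> x j}"
    using assms(3) by (rule measure_disagree_ge)
  also have "\<dots> \<le> measure \<mu> E"
    using assms(1,2) by (intro \<mu>.finite_measure_mono)
  finally show ?thesis .
qed

lemma measure_ge_if_contains_disagreements:
  assumes "\<And>i. i \<in> F \<Longrightarrow> {x. x i \<noteq> x j} \<subseteq> E" "E \<in> sets \<mu>"
    and "finite F" "j \<notin> F" "p j \<le> 1/2" "2 \<le> (\<Sum>i\<in>F. p i)"
  shows "1/3 \<le> measure \<mu> E"
proof -
  have "(\<Prod>i\<in>F. 1 - p i) \<le> exp (- (\<Sum>i\<in>F. p i))"
    using p_le_1 by (rule prod_one_minus_le_exp_neg_sum)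
  also have "\<dots> \<le> exp (-2)"
    using assms(6) by simp
  also have "\<dots> \<le> 1/3"
    using exp_ge_add_one_self[of 2] by (simp add: exp_minus field_simps)
  finally have "1/2 * (2/3) \<le> (1 - p j) * (1 - (\<Prod>i\<in>F. 1 - p i))"
    using assms(5) by (intro mult_mono) auto
  also have "\<dots> = measure \<mu> {x. \<not> x j \<and> (\<exists>i\<in>F. x i)}"
    using assms(3,4) by (rule measure_zero_and_some_one[symmetric])
  also have "\<dots> \<le> measure \<mu> E"
  proof (rule \<mu>.finite_measure_mono[OF _ assms(2)])
    show "{x. \<not> x j \<and> (\<exists>i\<in>F. x i)} \<subseteq> E"
      using assms(1) by blast
  qed
  finally show ?thesis
    by simp
qed

lemma not_TC1:
  assumes divergent: "\<not> summable p" and p_pos: "\<And>i. 0 < p i" and p_le_half: "\<And>i. p i \<le> 1/2"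
  shows "\<not> TC1 \<mu>"
proof
  assume "TC1 \<mu>"
  obtain E J C where E_sets: "\<And>k. E k \<in> sets \<mu>" and "finite J"
    and E_small: "\<And>k. measure \<mu> (E k) \<le> 1/4"
    and E_log: "\<And>k. measure \<mu> (E k) = 0 \<or> ln (real k + 1) \<le> C * ln (1 / measure \<mu> (E k))"
    and E_cover: "\<And>i. \<exists>j\<in>J. \<exists>k. {x \<in> space \<mu>. x i \<noteq> x j} \<subseteq> E k"
    by (rule TC1E[OF \<open>TC1 \<mu>\<close>, of "1/4"]) (simp, rule that)
  obtain B where J_below: "J \<subseteq> {..<B}"
    using finite_nat_bounded[OF \<open>finite J\<close>] by blast
  \<comment> \<open>By condition (2), a set \<open>E k\<close> of probability at least \<open>p j / 2\<close> has \<open>k + 1 \<le> K j\<close>.\<close>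
  define K where "K j = (2 / p j) powr max C 0" for j
  define G where "G = Sigma J (\<lambda>j. {k. real k + 1 \<le> K j})"
  define A where "A g = {i. {x. x i \<noteq> x (fst g)} \<subseteq> E (snd g)}" for g
  have "finite {k. real k + 1 \<le> K j}" for j
    by (rule finite_subset[of _ "{..nat \<lceil>K j\<rceil>}"]) (auto simp: le_nat_iff ceiling_le_iff le_ceiling_iff)
  then have "finite G"
    unfolding G_def using \<open>finite J\<close> by blast
  have "\<exists>g\<in>G. i \<in> A g" if "B \<le> i" for i
  proof -
    obtain j k where "j \<in> J" and "{x \<in> space \<mu>. x i \<noteq> x j} \<subseteq> E k"
      using E_cover[of i] by (elim bexE exE) (rule that)
    then have incl: "{x. x i \<noteq> x j} \<subseteq> E k"
      by simp
    have "i \<noteq> j"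
      using \<open>j \<in> J\<close> J_below \<open>B \<le> i\<close> by auto
    with incl E_sets have "p j / 2 \<le> measure \<mu> (E k)"
      using p_le_half by (rule measure_ge_if_contains_disagreement)
    then have "real k + 1 \<le> K j"
      using le_powr_of_ln_le[of "real k + 1" "p j / 2"] E_log[of k] E_small[of k] p_pos[of j]
      by (force simp: K_def)
    then show ?thesis
      using \<open>j \<in> J\<close> incl by (intro bexI[of _ "(j, k)"]) (simp_all add: G_def A_def)
  qed
  then obtain g F where "g \<in> G" "finite F" and F_sub: "F \<subseteq> A g - {..<B}" and F_large: "2 \<le> (\<Sum>i\<in>F. p i)"
    using not_summable_pigeonhole[OF divergent _ \<open>finite G\<close>] p_pos by (metis less_imp_le)
  then obtain j k where g: "g = (j, k)" and "j \<in> J"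
    by (auto simp: G_def)
  have E_contains: "{x. x i \<noteq> x j} \<subseteq> E k" if "i \<in> F" for i
    using subsetD[OF F_sub that] by (simp add: A_def g)
  have "j \<notin> F"
    using \<open>j \<in> J\<close> F_sub J_below by auto
  with E_contains E_sets \<open>finite F\<close> have "1/3 \<le> measure \<mu> (E k)"
    using p_le_half F_large by (rule measure_ge_if_contains_disagreements)
  with E_small[of k] show False
    by simp
qed

end

section \<open>Uniform convergence of the empirical means\<close>

lemma indep_vars_PiM_components:
  assumes "\<And>i. i \<in> I \<Longrightarrow> prob_space (M i)" "I \<noteq> {}"
  shows "prob_space.indep_vars (\<Pi>\<^sub>M i\<in>I. M i) M (\<lambda>i \<omega>. \<omega> i) I"
proof -
  interpret prob_space "\<Pi>\<^sub>M i\<in>I. M i"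
    using assms(1) by (rule prob_space_PiM)
  have "distr (\<Pi>\<^sub>M i\<in>I. M i) (\<Pi>\<^sub>M i\<in>I. M i) (\<lambda>\<omega>. \<lambda>i\<in>I. \<omega> i) = (\<Pi>\<^sub>M i\<in>I. M i)"
    by (subst distr_cong[where g = "\<lambda>\<omega>. \<omega>"]) (auto simp: space_PiM PiE_def extensional_restrict)
  also have "\<dots> = (\<Pi>\<^sub>M i\<in>I. distr (\<Pi>\<^sub>M i\<in>I. M i) (M i) (\<lambda>\<omega>. \<omega> i))"
    using assms(1) by (intro PiM_cong refl) (simp add: distr_PiM_component)
  finally show ?thesis
    using assms(2) by (subst indep_vars_iff_distr_eq_PiM') auto
qed

definition sample_mean :: "nat \<Rightarrow> nat \<Rightarrow> (nat \<Rightarrow> nat \<Rightarrow> bool) \<Rightarrow> real" where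
  "sample_mean n j \<omega> = 1 / real n * (\<Sum>i<n. if \<omega> i j then 1 else 0)"

lemma sample_mean_nonneg: "0 \<le> sample_mean n j \<omega>"
  by (simp add: sample_mean_def sum_nonneg)

lemma sample_mean_le_1: "sample_mean n j \<omega> \<le> 1"
proof -
  have "(\<Sum>i<n. if \<omega> i j then 1 else 0) \<le> real n"
    using sum_mono[of "{..<n}" "\<lambda>i. if \<omega> i j then 1 else 0 :: real" "\<lambda>_. 1"] by auto
  then show ?thesis
    by (cases "n = 0") (simp_all add: sample_mean_def field_simps)
qed

lemma sample_mean_le_if_no_collision:
  assumes "\<not> (\<exists>a<n. \<exists>b<n. a \<noteq> b \<and> \<omega> a j \<and> \<omega> b j)"
  shows "sample_mean n j \<omega> \<le> 1 / real n"
proof -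
  have "(\<Sum>i<n. if \<omega> i j then 1 else 0) = real (card {i\<in>{..<n}. \<omega> i j})"
    by (simp add: sum.If_cases Int_def)
  moreover have "card {i\<in>{..<n}. \<omega> i j} \<le> Suc 0"
    using assms by (subst card_le_Suc0_iff_eq) auto
  ultimately show ?thesis
    by (simp add: sample_mean_def divide_right_mono)
qed

context bernoulli_sequence
begin

definition samples :: "nat \<Rightarrow> (nat \<Rightarrow> nat \<Rightarrow> bool) measure" where
  "samples n = (\<Pi>\<^sub>M i\<in>{..<n}. \<mu>)"

sublocale samples: prob_space "samples n" for n
  unfolding samples_def by (intro prob_space_PiM \<mu>.prob_space_axioms)

lemma Delta_eq_sample_mean: "Delta \<mu> n = (\<integral>\<^sup>+\<omega>. (SUP j. ennreal \<bar>sample_mean n j \<omega> - p j\<bar>) \<partial>samples n)"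
  by (simp add: Delta_def samples_def sample_mean_def measure_coordinate)

lemma sample_coordinate_measurable [measurable]:
  "(\<lambda>\<omega>. \<omega> a j) \<in> measurable (samples n) (count_space UNIV)"
proof (cases "a < n")
  case True
  have "(\<lambda>\<omega>. \<omega> a) \<in> measurable (samples n) \<mu>"
    unfolding samples_def by (rule measurable_component_singleton) (use True in simp)
  then show ?thesis
    by measurable
next
  case False
  then have "\<omega> a j = undefined j" if "\<omega> \<in> space (samples n)" for \<omega>
    using that by (auto simp: samples_def space_PiM PiE_def extensional_def)
  then show ?thesis
    by (subst measurable_cong[where g = "\<lambda>_. undefined j"]) auto
qed

lemma sample_mean_measurable [measurable]:
  "sample_mean n j \<in> borel_measurable (samples n)"
  unfolding sample_mean_def by measurable

lemma prob_sample_coordinates: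
  assumes "S \<subseteq> {..<n}"
  shows "measure (samples n) {\<omega>\<in>space (samples n). \<forall>a\<in>S. \<omega> a j} = p j ^ card S"
proof -
  interpret product_prob_space "\<lambda>_. \<mu>" "{..<n}"
    by unfold_locales
  have "emeasure (samples n) {\<omega>\<in>space (samples n). \<forall>a\<in>S. \<omega> a \<in> {x. x j}} = (\<Prod>a\<in>S. emeasure \<mu> {x. x j})"
    unfolding samples_def using assms finite_subset[OF assms]
    by (intro emeasure_PiM_Collect) (auto simp: sets_coordinate)
  then show ?thesis
    using p_nonneg
    by (simp add: samples.emeasure_eq_measure \<mu>.emeasure_eq_measure measure_coordinate ennreal_power)
qed

definition deviation :: "nat \<Rightarrow> real \<Rightarrow> nat \<Rightarrow> (nat \<Rightarrow> nat \<Rightarrow> bool) set" where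
  "deviation n t j = {\<omega>\<in>space (samples n). t \<le> \<bar>sample_mean n j \<omega> - p j\<bar>}"

definition collision :: "nat \<Rightarrow> nat \<Rightarrow> (nat \<Rightarrow> nat \<Rightarrow> bool) set" where
  "collision n j = {\<omega>\<in>space (samples n). \<exists>a<n. \<exists>b<n. a \<noteq> b \<and> \<omega> a j \<and> \<omega> b j}"

lemma deviation_event [measurable]: "deviation n t j \<in> sets (samples n)"
  unfolding deviation_def by measurable

lemma collision_event [measurable]: "collision n j \<in> sets (samples n)"
  unfolding collision_def by measurable

lemma prob_deviation_le:
  assumes "0 < n" "0 \<le> t"
  shows "measure (samples n) (deviation n t j) \<le> 2 * exp (-2 * real n * t\<^sup>2)"
proof -
  define X :: "nat \<Rightarrow> (nat \<Rightarrow> nat \<Rightarrow> bool) \<Rightarrow> real" where "X i \<omega> = (if \<omega> i j then 1 else 0)" for i \<omega>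
  have "samples.indep_vars n (\<lambda>_. \<mu>) (\<lambda>i \<omega>. \<omega> i) {..<n}"
    unfolding samples_def using assms(1) by (intro indep_vars_PiM_components \<mu>.prob_space_axioms) auto
  then have indep: "samples.indep_vars n (\<lambda>_. borel) X {..<n}"
    unfolding X_def by (rule samples.indep_vars_compose2[where Y = "\<lambda>_ x. if x j then 1 else 0"]) simp
  have "samples.expectation n (X i) = p j" if "i < n" for i
  proof -
    have "samples.expectation n (X i) = samples.expectation n (indicator {\<omega>\<in>space (samples n). \<forall>a\<in>{i}. \<omega> a j})"
      by (intro Bochner_Integration.integral_cong) (auto simp: X_def)
    also have "\<dots> = p j"
      using that prob_sample_coordinates[of "{i}" n j] by simp
    finally show ?thesis .
  qed
  then have expectation_sum: "(\<Sum>i<n. samples.expectation n (X i)) = real n * p j"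
    by simp
  interpret Hoeffding_ineq "samples n" "{..<n}" X "\<lambda>_. 0" "\<lambda>_. 1" "\<Sum>i<n. samples.expectation n (X i)"
    by unfold_locales (simp_all add: indep X_def)
  have "deviation n t j = {\<omega>\<in>space (samples n). real n * t \<le> \<bar>(\<Sum>i<n. X i \<omega>) - (\<Sum>i<n. samples.expectation n (X i))\<bar>}"
  proof -
    have "real n * (sample_mean n j \<omega> - p j) = (\<Sum>i<n. X i \<omega>) - real n * p j" for \<omega>
      using assms(1) by (simp add: sample_mean_def X_def field_simps)
    then have "real n * \<bar>sample_mean n j \<omega> - p j\<bar> = \<bar>(\<Sum>i<n. X i \<omega>) - real n * p j\<bar>" for \<omega>
      by (metis abs_mult abs_of_nat)
    then have "t \<le> \<bar>sample_mean n j \<omega> - p j\<bar> \<longleftrightarrow> real n * t \<le> \<bar>(\<Sum>i<n. X i \<omega>) - real n * p j\<bar>" for \<omega>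
      using assms(1) by (metis mult_le_cancel_left_pos of_nat_0_less_iff)
    then show ?thesis
      unfolding deviation_def expectation_sum by simp
  qed
  also have "measure (samples n) \<dots> \<le> 2 * exp (-2 * (real n * t)\<^sup>2 / (\<Sum>i<n. (1 - 0)\<^sup>2))"
    using assms by (intro Hoeffding_ineq_abs_ge) auto
  also have "\<dots> = 2 * exp (-2 * real n * t\<^sup>2)"
    using assms(1) by (simp add: power2_eq_square)
  finally show ?thesis .
qed

lemma prob_collision_le: "measure (samples n) (collision n j) \<le> (real n * p j)\<^sup>2"
proof -
  define P where "P = {(a, b). a < n \<and> b < n \<and> a \<noteq> b}"
  define both where "both g = {\<omega>\<in>space (samples n). \<forall>c\<in>{fst g, snd g}. \<omega> c j}" for g
  have "finite P"
    by (rule finite_subset[of _ "{..<n} \<times> {..<n}"]) (auto simp: P_def)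
  have "collision n j = (\<Union>g\<in>P. both g)"
    by (auto simp: collision_def P_def both_def) blast
  also have "measure (samples n) \<dots> \<le> (\<Sum>g\<in>P. measure (samples n) (both g))"
    using \<open>finite P\<close> by (intro samples.finite_measure_subadditive_finite) (auto simp: both_def)
  also have "\<dots> = (\<Sum>g\<in>P. p j ^ 2)"
  proof (intro sum.cong refl)
    fix g assume "g \<in> P"
    then show "measure (samples n) (both g) = p j ^ 2"
      using prob_sample_coordinates[of "{fst g, snd g}" n j] by (auto simp: P_def both_def power2_eq_square)
  qed
  also have "\<dots> \<le> (real n * p j)\<^sup>2"
  proof -
    have "card P \<le> card ({..<n} \<times> {..<n})"
      by (intro card_mono) (auto simp: P_def)
    then have "real (card P) \<le> real n ^ 2"
      by (simp add: power2_eq_square flip: of_nat_mult)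
    then show ?thesis
      by (simp add: power_mult_distrib mult_right_mono)
  qed
  finally show ?thesis .
qed

lemma emeasure_deviations_le:
  assumes "0 < n" "0 \<le> t"
  shows "emeasure (samples n) (\<Union>j<N. deviation n t j) \<le> ennreal (real N * (2 * exp (-2 * real n * t\<^sup>2)))"
proof -
  have "emeasure (samples n) (\<Union>j<N. deviation n t j) \<le> (\<Sum>j<N. emeasure (samples n) (deviation n t j))"
    by (intro emeasure_subadditive_finite) auto
  also have "\<dots> \<le> (\<Sum>j<N. ennreal (2 * exp (-2 * real n * t\<^sup>2)))"
    using prob_deviation_le[OF assms] by (intro sum_mono) (simp add: samples.emeasure_eq_measure)
  also have "\<dots> = ennreal (real N * (2 * exp (-2 * real n * t\<^sup>2)))"
    by (simp add: ennreal_of_nat_eq_real_of_nat ennreal_mult')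
  finally show ?thesis .
qed

lemma emeasure_collisions_le:
  assumes "summable (\<lambda>j. p j ^ 2)"
  shows "emeasure (samples n) (\<Union>j. collision n (j + N)) \<le> ennreal (real n ^ 2 * (\<Sum>j. p (j + N) ^ 2))"
proof -
  have "emeasure (samples n) (\<Union>j. collision n (j + N)) \<le> (\<Sum>j. emeasure (samples n) (collision n (j + N)))"
    by (intro emeasure_subadditive_countably) auto
  also have "\<dots> \<le> (\<Sum>j. ennreal (real n ^ 2 * p (j + N) ^ 2))"
    using prob_collision_le
    by (intro suminf_le) (auto simp: samples.emeasure_eq_measure power_mult_distrib)
  also have "\<dots> = ennreal (real n ^ 2 * (\<Sum>j. p (j + N) ^ 2))"
    using assms summable_iff_shift[of "\<lambda>j. p j ^ 2" N]
    by (intro suminf_ennreal_eq sums_mult summable_sums) auto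
  finally show ?thesis .
qed

lemma sup_deviation_le:
  assumes "1 / real n \<le> t" "\<And>j. N \<le> j \<Longrightarrow> p j \<le> t" "\<omega> \<in> space (samples n)"
  shows "(SUP j. ennreal \<bar>sample_mean n j \<omega> - p j\<bar>)
    \<le> ennreal t + indicator ((\<Union>j<N. deviation n t j) \<union> (\<Union>j. collision n (j + N))) \<omega>"
    (is "_ \<le> ennreal t + indicator ?bad \<omega>")
proof (rule SUP_least)
  fix j
  consider "\<omega> \<in> ?bad" | "j < N" "\<omega> \<notin> deviation n t j" | "N \<le> j" "\<omega> \<notin> collision n j"
    by (metis (no_types, lifting) UN_I UNIV_I UnCI le_add_diff_inverse2 lessThan_iff not_le)
  then show "ennreal \<bar>sample_mean n j \<omega> - p j\<bar> \<le> ennreal t + indicator ?bad \<omega>"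
  proof cases
    case 1
    have "\<bar>sample_mean n j \<omega> - p j\<bar> \<le> 1"
      using sample_mean_nonneg[of n j \<omega>] sample_mean_le_1[of n j \<omega>] p_nonneg[of j] p_le_1[of j]
      unfolding abs_le_iff by linarith
    then show ?thesis
      using 1 by (simp add: ennreal_leI add_increasing)
  next
    case 2
    then have "\<bar>sample_mean n j \<omega> - p j\<bar> \<le> t"
      using assms(3) by (simp add: deviation_def)
    then show ?thesis
      by (simp add: ennreal_leI add_increasing2)
  next
    case 3
    then have "\<not> (\<exists>a<n. \<exists>b<n. a \<noteq> b \<and> \<omega> a j \<and> \<omega> b j)"
      using assms(3) unfolding collision_def by blast
    then have "sample_mean n j \<omega> \<le> 1 / real n"
      by (rule sample_mean_le_if_no_collision)
    moreover have "p j \<le> t"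
      using 3(1) by (rule assms(2))
    ultimately have "\<bar>sample_mean n j \<omega> - p j\<bar> \<le> t"
      using assms(1) sample_mean_nonneg[of n j \<omega>] p_nonneg[of j] unfolding abs_le_iff by linarith
    then show ?thesis
      by (simp add: ennreal_leI add_increasing2)
  qed
qed

lemma Delta_le:
  assumes "0 < n" "0 \<le> t" "1 / real n \<le> t" "\<And>j. N \<le> j \<Longrightarrow> p j \<le> t" "summable (\<lambda>j. p j ^ 2)"
  shows "Delta \<mu> n \<le> ennreal (t + real N * (2 * exp (-2 * real n * t\<^sup>2)) + real n ^ 2 * (\<Sum>j. p (j + N) ^ 2))"
proof -
  let ?deviations = "\<Union>j<N. deviation n t j" and ?collisions = "\<Union>j. collision n (j + N)"
  have tail_nonneg: "0 \<le> (\<Sum>j. p (j + N) ^ 2)"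
    using assms(5) summable_iff_shift[of "\<lambda>j. p j ^ 2" N] by (intro suminf_nonneg) auto
  have "Delta \<mu> n \<le> (\<integral>\<^sup>+\<omega>. ennreal t + indicator (?deviations \<union> ?collisions) \<omega> \<partial>samples n)"
    unfolding Delta_eq_sample_mean using assms(3,4) by (intro nn_integral_mono sup_deviation_le)
  also have "\<dots> = ennreal t + emeasure (samples n) (?deviations \<union> ?collisions)"
    by (subst nn_integral_add) (auto simp: samples.emeasure_space_1)
  also have "emeasure (samples n) (?deviations \<union> ?collisions)
      \<le> emeasure (samples n) ?deviations + emeasure (samples n) ?collisions"
    by (intro emeasure_subadditive) auto
  also have "\<dots> \<le> ennreal (real N * (2 * exp (-2 * real n * t\<^sup>2))) + ennreal (real n ^ 2 * (\<Sum>j. p (j + N) ^ 2))"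
    using assms by (intro add_mono emeasure_deviations_le emeasure_collisions_le)
  finally show ?thesis
    using assms(2) tail_nonneg by (simp add: add.assoc)
qed

end

section \<open>The example \<open>p i = 1 / (i + 2)\<close>\<close>

interpretation harmonic: bernoulli_sequence "\<lambda>i. 1 / (real i + 2)"
  by unfold_locales auto

lemma Delta_harmonic_le:
  assumes "1 \<le> n"
  shows "Delta harmonic.\<mu> n \<le> ennreal (real n powr (-1/4)
    + real (n ^ 3) * (2 * exp (-2 * real n * (real n powr (-1/4))\<^sup>2)) + real n ^ 2 / (real (n ^ 3) + 1))"
proof -
  define t where "t = real n powr (-1/4)"
  have "1 / real n \<le> t"
    using assms powr_mono[of "-1" "-1/4" "real n"] by (simp add: t_def powr_minus_divide)
  moreover have "1 / (real j + 2) \<le> t" if "n ^ 3 \<le> j" for j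
  proof -
    have "n \<le> j"
      using that assms power_increasing[of 1 3 n] by simp
    then have "1 / (real j + 2) \<le> 1 / real n"
      using assms by (intro divide_left_mono) auto
    then show ?thesis
      using \<open>1 / real n \<le> t\<close> by linarith
  qed
  ultimately have "Delta harmonic.\<mu> n \<le> ennreal (t + real (n ^ 3) * (2 * exp (-2 * real n * t\<^sup>2))
      + real n ^ 2 * (\<Sum>j. (1 / (real (j + n ^ 3) + 2))\<^sup>2))"
    using assms summable_inverse_square_tail[of 0]
    by (intro harmonic.Delta_le) (auto simp: t_def)
  also have "\<dots> \<le> ennreal (t + real (n ^ 3) * (2 * exp (-2 * real n * t\<^sup>2)) + real n ^ 2 / (real (n ^ 3) + 1))"
  proof -
    have "real n ^ 2 * (\<Sum>j. (1 / (real (j + n ^ 3) + 2))\<^sup>2) \<le> real n ^ 2 * (1 / (real (n ^ 3) + 1))"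
      using suminf_inverse_square_tail_le[of "n ^ 3"] by (intro mult_left_mono) auto
    then show ?thesis
      by (intro ennreal_leI) simp
  qed
  finally show ?thesis
    unfolding t_def .
qed

lemma Delta_harmonic_tendsto_0: "Delta harmonic.\<mu> \<longlonglongrightarrow> 0"
proof -
  have bound_tendsto_0: "(\<lambda>n. ennreal (real n powr (-1/4) + real (n ^ 3) * (2 * exp (-2 * real n * (real n powr (-1/4))\<^sup>2))
      + real n ^ 2 / (real (n ^ 3) + 1))) \<longlonglongrightarrow> 0"
    unfolding ennreal_0[symmetric] by (intro tendsto_ennrealI) real_asymp
  have bound: "eventually (\<lambda>n. Delta harmonic.\<mu> n \<le> ennreal (real n powr (-1/4)
      + real (n ^ 3) * (2 * exp (-2 * real n * (real n powr (-1/4))\<^sup>2)) + real n ^ 2 / (real (n ^ 3) + 1)))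
      sequentially"
    using Delta_harmonic_le by (intro eventually_sequentiallyI)
  show ?thesis
    using tendsto_sandwich[OF _ bound tendsto_const bound_tendsto_0] by simp
qed

theorem proposition21:
  shows "\<exists>M. is_prob_on_cube M \<and> (Delta M \<longlonglongrightarrow> 0) \<and> \<not> TC1 M"
proof (intro exI conjI)
  show "is_prob_on_cube harmonic.\<mu>"
    unfolding is_prob_on_cube_def using harmonic.\<mu>.prob_space_axioms harmonic.sets_\<mu> by blast
  show "Delta harmonic.\<mu> \<longlonglongrightarrow> 0"
    by (rule Delta_harmonic_tendsto_0)
  show "\<not> TC1 harmonic.\<mu>"
    using not_summable_inverse_add_2 by (rule harmonic.not_TC1) (simp_all add: field_simps)
qed

end
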